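(* Let $p\ge 2$ be an integer and $0<\varphi<2\pi/p$. In the Poincaré disc model of the hyperbolic plane consider the ideal points $v_m=e^{2\pi i m/p}$ and $w_m=e^{i(\varphi+2\pi m/p)}$, $m\in\mathbb Z$ (indices mod $p$). Choose horocycles based at all these points so that the family of horocycles is invariant under the rotation $z\mapsto e^{2\pi i/p}z$ (i.e. the horocycle at $v_{m+1}$ is the rotated horocycle at $v_m$, and likewise for the $w_m$). Let $c=\lambda(v_0,v_1)$, $c'=\lambda(w_0,w_1)$, $a=\lambda(v_0,w_0)$ and $b=\lambda(w_0,v_1)$. Then $$cc'=a^2+2\cos(\pi/p)\,ab+b^2.$$
   Context: For two distinct ideal points $x,y$ with chosen horocycles $h_x,h_y$, the $\lambda$-length is $\lambda(x,y)=e^{\ell/2}$, where $\ell$ is the signed hyperbolic length of the segment of the geodesic joining $x$ and $y$ that lies between $h_x$ and $h_y$ ($\ell$ is negative when the horocycles overlap). Geometrically, $v_0,\dots,v_{p-1}$ are the vertices of an ideal equilateral $p$-gon centered at a $\mathbb Z_p$-orbifold point, with ideal triangles $v_m w_m v_{m+1}$ attached to its sides; $c$ and $c'$ are the $\lambda$-lengths of a side before and after the flip. *)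

theory Defs
  imports Complex_Main
begin

text \<open>Poincare disc model (curvature -1). Ideal points are the points of the unit circle.\<close>

definition hdist :: "complex \<Rightarrow> complex \<Rightarrow> real" where
  "hdist z w = arcosh (1 + 2 * (cmod (z - w))^2 / ((1 - (cmod z)^2) * (1 - (cmod w)^2)))"

text \<open>A horocycle based at the ideal point \<open>\<xi>\<close> is a Euclidean circle inside the disc
  internally tangent to the unit circle at \<open>\<xi>\<close>; it is determined by its Euclidean radius
  \<open>r \<in> (0,1)\<close>: centre \<open>(1-r)\<xi>\<close>, radius \<open>r\<close>.\<close>
definition horocycle :: "complex \<Rightarrow> real \<Rightarrow> complex set" where
  "horocycle \<xi> r = {z. cmod (z - of_real (1 - r) * \<xi>) = r} - {\<xi>}"

definition horoball :: "complex \<Rightarrow> real \<Rightarrow> complex set" where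
  "horoball \<xi> r = {z. cmod (z - of_real (1 - r) * \<xi>) < r}"

text \<open>The geodesic joining two distinct ideal points \<open>\<xi>, \<eta>\<close>: the part inside the open disc of
  the circle (or line) through \<open>\<xi>, \<eta>\<close> orthogonal to the unit circle.\<close>
definition geodesic :: "complex \<Rightarrow> complex \<Rightarrow> complex set" where
  "geodesic \<xi> \<eta> = {z. cmod z < 1 \<and>
      - Im (cnj \<eta> * \<xi>) * ((cmod z)^2 + 1) = 2 * Re (cnj (\<i> * (\<xi> - \<eta>)) * z)}"

definition horo_foot :: "complex \<Rightarrow> real \<Rightarrow> complex \<Rightarrow> complex" where
  "horo_foot \<xi> r \<eta> = (THE z. z \<in> horocycle \<xi> r \<and> z \<in> geodesic \<xi> \<eta>)"

text \<open>Signed length of the segment of the geodesic between the two horocycles: negative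
  exactly when the horoballs overlap, i.e. when the foot on the horocycle at \<open>\<eta>\<close> lies
  inside the horoball at \<open>\<xi>\<close>.\<close>
definition horo_signed_length :: "complex \<Rightarrow> real \<Rightarrow> complex \<Rightarrow> real \<Rightarrow> real" where
  "horo_signed_length \<xi> r \<eta> s =
     (let P = horo_foot \<xi> r \<eta>; Q = horo_foot \<eta> s \<xi>
      in if Q \<in> horoball \<xi> r then - hdist P Q else hdist P Q)"

definition lambda_length :: "complex \<Rightarrow> real \<Rightarrow> complex \<Rightarrow> real \<Rightarrow> real" where
  "lambda_length \<xi> r \<eta> s = exp (horo_signed_length \<xi> r \<eta> s / 2)"

end

theory Submission
  imports Defs
begin

text \<open>Rotations of the disc preserve horocycles, horoballs, geodesics and \<open>hdist\<close>, so a
  \<open>\<lambda>\<close>-length can be computed after moving its first ideal point to 1. There the foot of the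
  geodesic on a horocycle of Euclidean radius \<open>r\<close> has an explicit closed form, and a direct
  computation gives \<open>\<lambda>(\<xi>, \<eta>)\<^sup>2 = (1 - Re (cnj \<xi> * \<eta>)) (1 - r) (1 - s) / (2 r s)\<close>, i.e.
  \<open>\<lambda> = sin (\<theta>/2) \<surd>(A\<^sub>r A\<^sub>s)\<close> with \<open>A\<^sub>r = (1 - r) / r\<close> and \<open>\<theta>\<close> the angle between \<open>\<xi>\<close> and \<open>\<eta>\<close>.
  With \<open>t = \<pi>/p\<close> and \<open>x = \<phi>/2\<close> the four \<open>\<lambda>\<close>-lengths become \<open>c = sin t A\<close>, \<open>c' = sin t B\<close>,
  \<open>a = sin x \<surd>(A B)\<close>, \<open>b = sin (t - x) \<surd>(A B)\<close>, and the claim reduces to the identity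
  \<open>sin\<^sup>2 t = sin\<^sup>2 x + 2 cos t sin x sin (t - x) + sin\<^sup>2 (t - x)\<close>.\<close>

lemma unit_circle_coords:
  assumes "cmod e = 1" "e \<noteq> 1"
  shows "(Re e)^2 + (Im e)^2 = 1" "Re e < 1"
proof -
  show h: "(Re e)^2 + (Im e)^2 = 1" using assms(1) by (simp add: cmod_power2[symmetric])
  have "Re e \<le> 1" using abs_Re_le_cmod[of e] assms(1) by simp
  moreover have "Re e \<noteq> 1"
  proof
    assume "Re e = 1"
    with h have "Im e = 0" by simp
    with \<open>Re e = 1\<close> assms(2) show False by (simp add: complex_eq_iff)
  qed
  ultimately show "Re e < 1" by linarith
qed

definition foot_denom :: "real \<Rightarrow> real \<Rightarrow> real" where
  "foot_denom r u = (1 - u) + r^2 * (1 + u)"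

lemma foot_denom_pos:
  assumes "u^2 + v^2 = 1" "u < 1"
  shows "0 < foot_denom r u"
proof -
  have "u^2 \<le> 1" using assms(1) by (metis le_add_same_cancel1 zero_le_power2)
  then have "0 \<le> 1 + u" by (simp add: abs_square_le_1)
  then show ?thesis unfolding foot_denom_def using assms(2) by (simp add: add_pos_nonneg)
qed

text \<open>The foot on the horocycle at 1 of Euclidean radius \<open>r\<close> of the geodesic from 1 to \<open>e\<close>,
  obtained by intersecting the two circles.\<close>
definition horo_foot_at_1 :: "real \<Rightarrow> complex \<Rightarrow> complex" where
  "horo_foot_at_1 r e =
     Complex (1 - 2 * r * (1 - Re e) / foot_denom r (Re e)) (2 * r^2 * Im e / foot_denom r (Re e))"

lemma horocycle_geodesic_coords_unique:
  fixes u v r x y :: real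
  assumes uv: "u^2 + v^2 = 1" and u: "u < 1" and r: "0 < r"
    and horo: "(x - (1 - r))^2 + y^2 = r^2" and ne: "(x, y) \<noteq> (1, 0)"
    and geo: "v * (x^2 + y^2 + 1) = 2 * v * x + 2 * (1 - u) * y"
  shows "x = 1 - 2 * r * (1 - u) / foot_denom r u" "y = 2 * r^2 * v / foot_denom r u"
proof -
  have D: "foot_denom r u > 0" using uv u by (rule foot_denom_pos)
  have lin: "(1 - u) * y = r * v * (1 - x)" using horo geo by algebra
  have x1: "x \<noteq> 1" using horo ne r by auto
  \<comment> \<open>Both circles pass through 1; the factor \<open>1 - x\<close> accounts for that common point.\<close>
  have "(1 - x) * (1 - u) * ((1 - x) * foot_denom r u - 2 * r * (1 - u))
     = (1 - u)^2 * ((x - (1 - r))^2 + y^2 - r^2)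
       - ((1 - u) * y - r * v * (1 - x)) * ((1 - u) * y + r * v * (1 - x))
       - r^2 * (1 - x)^2 * (u^2 + v^2 - 1)"
    unfolding foot_denom_def by algebra
  also have "\<dots> = 0" using uv horo lin by simp
  finally have xD: "(1 - x) * foot_denom r u = 2 * r * (1 - u)" using x1 u by simp
  then show "x = 1 - 2 * r * (1 - u) / foot_denom r u" using D by (simp add: field_simps)
  have "(1 - u) * (y * foot_denom r u) = r * v * ((1 - x) * foot_denom r u)"
    using lin by (simp add: ac_simps)
  also have "\<dots> = (1 - u) * (2 * r^2 * v)" unfolding xD by algebra
  finally have "y * foot_denom r u = 2 * r^2 * v" using u by simp
  then show "y = 2 * r^2 * v / foot_denom r u" using D by (simp add: field_simps)
qed

lemma foot_coords_solve_horocycle_geodesic: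
  fixes u v r x y :: real
  assumes uv: "u^2 + v^2 = 1" and u: "u < 1" and r: "0 < r" "r < 1"
    and x: "x = 1 - 2 * r * (1 - u) / foot_denom r u" and y: "y = 2 * r^2 * v / foot_denom r u"
  shows "(x - (1 - r))^2 + y^2 = r^2" "x < 1" "x^2 + y^2 < 1"
    "v * (x^2 + y^2 + 1) = 2 * v * x + 2 * (1 - u) * y"
proof -
  define D where "D = foot_denom r u"
  have D: "D > 0" unfolding D_def using uv u by (rule foot_denom_pos)
  have xD: "x * D = D - 2 * r * (1 - u)" and yD: "y * D = 2 * r^2 * v"
    using x y D by (simp_all add: D_def field_simps)
  have "((x - (1 - r))^2 + y^2) * D^2 = (x * D - (1 - r) * D)^2 + (y * D)^2"
    by (simp add: algebra_simps power2_eq_square)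
  also have "\<dots> = (r * D - 2 * r * (1 - u))^2 + (2 * r^2 * v)^2" unfolding xD yD by algebra
  also have "\<dots> = r^2 * D^2 + 4 * r^4 * (u^2 + v^2 - 1)" unfolding D_def foot_denom_def by algebra
  finally show horo: "(x - (1 - r))^2 + y^2 = r^2" using D uv by simp
  have "0 < 2 * r * (1 - u) / D" using D r u by simp
  then show "x < 1" unfolding x D_def by linarith
  then have "0 < (1 - r) * (1 - x)" using r by simp
  moreover have "x^2 + y^2 = 1 - 2 * (1 - r) * (1 - x)" using horo by algebra
  ultimately show "x^2 + y^2 < 1" by linarith
  have "(1 - u) * y * D = r * v * (1 - x) * D"
    using xD yD by algebra
  then have "(1 - u) * y = r * v * (1 - x)" using D by simp
  then show "v * (x^2 + y^2 + 1) = 2 * v * x + 2 * (1 - u) * y" using horo by algebra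
qed

lemma horocycle_1_iff:
  fixes x y r :: real
  assumes "0 < r"
  shows "Complex x y \<in> horocycle 1 r \<longleftrightarrow> (x - (1 - r))^2 + y^2 = r^2 \<and> (x, y) \<noteq> (1, 0)"
proof -
  have "cmod (Complex x y - of_real (1 - r) * 1) = r \<longleftrightarrow> (cmod (Complex x y - of_real (1 - r)))^2 = r^2"
    using assms by (simp add: power2_eq_iff_nonneg)
  also have "(cmod (Complex x y - of_real (1 - r)))^2 = (x - (1 - r))^2 + y^2"
    unfolding cmod_power2 by simp
  finally show ?thesis unfolding horocycle_def by (auto simp: complex_eq_iff)
qed

lemma geodesic_1_iff:
  fixes x y :: real
  shows "Complex x y \<in> geodesic 1 e \<longleftrightarrow>
           x^2 + y^2 < 1 \<and> Im e * (x^2 + y^2 + 1) = 2 * Im e * x + 2 * (1 - Re e) * y"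
proof -
  have "cmod (Complex x y) < 1 \<longleftrightarrow> (cmod (Complex x y))^2 < 1"
    by (simp add: abs_square_less_1)
  moreover have "(cmod (Complex x y))^2 = x^2 + y^2" unfolding cmod_power2 by simp
  moreover have "Re (cnj (\<i> * (1 - e)) * Complex x y) = Im e * x + (1 - Re e) * y"
    by (simp add: algebra_simps)
  ultimately show ?thesis unfolding geodesic_def by auto
qed

lemma horocycle_geodesic_1_iff:
  assumes e: "cmod e = 1" "e \<noteq> 1" and r: "0 < r" "r < 1"
  shows "z \<in> horocycle 1 r \<and> z \<in> geodesic 1 e \<longleftrightarrow> z = horo_foot_at_1 r e"
proof -
  obtain x y where z: "z = Complex x y" by (metis complex.collapse)
  have uv: "(Re e)^2 + (Im e)^2 = 1" and u: "Re e < 1" using unit_circle_coords[OF e] by auto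
  have foot_iff: "z = horo_foot_at_1 r e \<longleftrightarrow>
      x = 1 - 2 * r * (1 - Re e) / foot_denom r (Re e) \<and> y = 2 * r^2 * Im e / foot_denom r (Re e)"
    unfolding z horo_foot_at_1_def complex.inject ..
  show ?thesis
  proof
    assume "z \<in> horocycle 1 r \<and> z \<in> geodesic 1 e"
    then have "(x - (1 - r))^2 + y^2 = r^2" "(x, y) \<noteq> (1, 0)"
      "Im e * (x^2 + y^2 + 1) = 2 * Im e * x + 2 * (1 - Re e) * y"
      unfolding z horocycle_1_iff[OF r(1)] geodesic_1_iff by blast+
    from horocycle_geodesic_coords_unique[OF uv u r(1) this]
    show "z = horo_foot_at_1 r e" unfolding foot_iff ..
  next
    assume "z = horo_foot_at_1 r e"
    then have "x = 1 - 2 * r * (1 - Re e) / foot_denom r (Re e)"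
      and "y = 2 * r^2 * Im e / foot_denom r (Re e)" unfolding foot_iff by blast+
    from foot_coords_solve_horocycle_geodesic[OF uv u r this] show "z \<in> horocycle 1 r \<and> z \<in> geodesic 1 e"
      unfolding z horocycle_1_iff[OF r(1)] geodesic_1_iff by auto
  qed
qed

lemma cnj_mult_unit: "cmod w = 1 \<Longrightarrow> cnj w * w = 1"
  by (metis complex_norm_square mult.commute of_real_1 power_one)

lemma unit_mult_cnj_mult: "cmod w = 1 \<Longrightarrow> w * (cnj w * z) = z"
  by (metis cnj_mult_unit mult.assoc mult.commute mult.left_neutral)

lemma cnj_mult_unit_circle:
  assumes "cmod \<xi> = 1" "cmod \<eta> = 1" "\<xi> \<noteq> \<eta>"
  shows "cmod (cnj \<xi> * \<eta>) = 1" "cnj \<xi> * \<eta> \<noteq> 1"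
proof -
  show "cmod (cnj \<xi> * \<eta>) = 1" using assms by (simp add: norm_mult)
  show "cnj \<xi> * \<eta> \<noteq> 1"
  proof
    assume "cnj \<xi> * \<eta> = 1"
    then have "\<eta> = \<xi>" using unit_mult_cnj_mult[OF assms(1), of \<eta>] by simp
    with assms(3) show False by simp
  qed
qed

lemma norm_rotate_diff:
  assumes "cmod w = 1"
  shows "cmod (w * a - w * b) = cmod (a - b)"
proof -
  have "w * a - w * b = w * (a - b)" by (simp add: algebra_simps)
  then show ?thesis by (simp add: norm_mult assms)
qed

lemma hdist_rotate: "cmod w = 1 \<Longrightarrow> hdist (w * z) (w * z') = hdist z z'"
  unfolding hdist_def by (simp add: norm_rotate_diff norm_mult)

lemma norm_rotate_horo_centre:
  assumes "cmod w = 1"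
  shows "cmod (w * z - of_real (1 - r) * (w * \<xi>)) = cmod (z - of_real (1 - r) * \<xi>)"
proof -
  have "w * z - of_real (1 - r) * (w * \<xi>) = w * z - w * (of_real (1 - r) * \<xi>)"
    by (simp only: ac_simps)
  then show ?thesis by (simp only: norm_rotate_diff[OF assms])
qed

lemma horoball_rotate:
  assumes "cmod w = 1"
  shows "w * z \<in> horoball (w * \<xi>) r \<longleftrightarrow> z \<in> horoball \<xi> r"
  unfolding horoball_def mem_Collect_eq norm_rotate_horo_centre[OF assms] ..

lemma horocycle_rotate:
  assumes "cmod w = 1"
  shows "w * z \<in> horocycle (w * \<xi>) r \<longleftrightarrow> z \<in> horocycle \<xi> r"
proof -
  have "w * z = w * \<xi> \<longleftrightarrow> z = \<xi>" using assms by (metis mult_cancel_left norm_zero zero_neq_one)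
  then show ?thesis
    unfolding horocycle_def Diff_iff mem_Collect_eq singleton_iff norm_rotate_horo_centre[OF assms]
    by blast
qed

lemma geodesic_rotate:
  assumes "cmod w = 1"
  shows "w * z \<in> geodesic (w * \<xi>) (w * \<eta>) \<longleftrightarrow> z \<in> geodesic \<xi> \<eta>"
proof -
  have w: "cnj w * w = 1" using cnj_mult_unit[OF assms] .
  have "cnj (w * \<eta>) * (w * \<xi>) = (cnj w * w) * (cnj \<eta> * \<xi>)" by (simp add: ac_simps)
  then have a: "cnj (w * \<eta>) * (w * \<xi>) = cnj \<eta> * \<xi>" using w by simp
  have "cnj (\<i> * (w * \<xi> - w * \<eta>)) * (w * z) = (cnj w * w) * (cnj (\<i> * (\<xi> - \<eta>)) * z)"
    by (simp add: algebra_simps)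
  then have b: "cnj (\<i> * (w * \<xi> - w * \<eta>)) * (w * z) = cnj (\<i> * (\<xi> - \<eta>)) * z" using w by simp
  have n: "cmod (w * z) = cmod z" by (simp add: norm_mult assms)
  show ?thesis by (simp only: geodesic_def mem_Collect_eq a b n)
qed

lemma horo_foot_eq:
  assumes \<xi>: "cmod \<xi> = 1" and \<eta>: "cmod \<eta> = 1" and "\<xi> \<noteq> \<eta>" and r: "0 < r" "r < 1"
  shows "horo_foot \<xi> r \<eta> = \<xi> * horo_foot_at_1 r (cnj \<xi> * \<eta>)"
proof -
  define e where "e = cnj \<xi> * \<eta>"
  note unrotate = unit_mult_cnj_mult[OF \<xi>]
  have \<eta>e: "\<xi> * e = \<eta>" unfolding e_def by (rule unrotate)
  have e: "cmod e = 1" "e \<noteq> 1" unfolding e_def using cnj_mult_unit_circle assms by blast+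
  have "z \<in> horocycle \<xi> r \<and> z \<in> geodesic \<xi> \<eta> \<longleftrightarrow> z = \<xi> * horo_foot_at_1 r e" for z
  proof -
    have "z \<in> horocycle \<xi> r \<and> z \<in> geodesic \<xi> \<eta> \<longleftrightarrow>
          \<xi> * (cnj \<xi> * z) \<in> horocycle (\<xi> * 1) r \<and> \<xi> * (cnj \<xi> * z) \<in> geodesic (\<xi> * 1) (\<xi> * e)"
      by (simp only: unrotate \<eta>e mult_1_right)
    also have "\<dots> \<longleftrightarrow> cnj \<xi> * z = horo_foot_at_1 r e"
      using horocycle_rotate[OF \<xi>] geodesic_rotate[OF \<xi>] horocycle_geodesic_1_iff[OF e r] by blast
    also have "\<dots> \<longleftrightarrow> z = \<xi> * horo_foot_at_1 r e" by (metis unrotate cnj_mult_unit[OF \<xi>] mult.assoc mult_1)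
    finally show ?thesis .
  qed
  then show ?thesis unfolding horo_foot_def e_def[symmetric] by (intro the_equality) blast+
qed

lemma one_minus_norm_sq_horo_foot_at_1:
  assumes e: "cmod e = 1" "e \<noteq> 1" and r: "0 < r" "r < 1"
  shows "1 - (cmod (horo_foot_at_1 r e))^2 = 4 * (1 - r) * r * (1 - Re e) / foot_denom r (Re e)"
proof -
  have uv: "(Re e)^2 + (Im e)^2 = 1" and u: "Re e < 1" using unit_circle_coords[OF e] by auto
  define x y where "x = Re (horo_foot_at_1 r e)" and "y = Im (horo_foot_at_1 r e)"
  have x: "x = 1 - 2 * r * (1 - Re e) / foot_denom r (Re e)"
    and y: "y = 2 * r^2 * Im e / foot_denom r (Re e)"
    unfolding x_def y_def horo_foot_at_1_def by simp_all
  have "1 - (cmod (horo_foot_at_1 r e))^2 = 2 * (1 - r) * (1 - x)"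
    using foot_coords_solve_horocycle_geodesic(1)[OF uv u r x y] unfolding cmod_power2 x_def y_def by algebra
  also have "\<dots> = 4 * (1 - r) * r * (1 - Re e) / foot_denom r (Re e)" unfolding x by (simp add: field_simps)
  finally show ?thesis .
qed

lemma norm_sq_diff_horo_feet:
  assumes e: "cmod e = 1" "e \<noteq> 1"
  shows "(cmod (horo_foot_at_1 r e - e * horo_foot_at_1 s (cnj e)))^2
       = 2 * (1 - Re e) * ((1 - Re e) * (1 - r) * (1 - s) - 2 * r * s)^2
           / (foot_denom r (Re e) * foot_denom s (Re e))"
proof -
  define u v where "u = Re e" and "v = Im e"
  have uv: "u^2 + v^2 = 1" and u: "u < 1" using unit_circle_coords[OF e] by (auto simp: u_def v_def)
  define Dr Ds where "Dr = foot_denom r u" and "Ds = foot_denom s u"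
  have Dr: "Dr > 0" and Ds: "Ds > 0" unfolding Dr_def Ds_def using uv u by (auto intro: foot_denom_pos)
  define X where "X = Ds * (Dr - 2 * r * (1 - u)) - Dr * (u * (Ds - 2 * s * (1 - u)) + 2 * s^2 * v^2)"
  define Y where "Y = 2 * r^2 * v * Ds - Dr * (v * (Ds - 2 * s * (1 - u)) - 2 * s^2 * u * v)"
  define K where "K = (1 - u) * (1 - r) * (1 - s) - 2 * r * s"
  have "Re (horo_foot_at_1 r e - e * horo_foot_at_1 s (cnj e)) = X / (Dr * Ds)"
    using Dr Ds
    by (simp add: horo_foot_at_1_def X_def u_def v_def Dr_def Ds_def field_simps power2_eq_square)
  moreover have "Im (horo_foot_at_1 r e - e * horo_foot_at_1 s (cnj e)) = Y / (Dr * Ds)"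
    using Dr Ds
    by (simp add: horo_foot_at_1_def Y_def u_def v_def Dr_def Ds_def field_simps power2_eq_square)
  ultimately have "(cmod (horo_foot_at_1 r e - e * horo_foot_at_1 s (cnj e)))^2
      = (X^2 + Y^2) / (Dr * Ds)^2"
    unfolding cmod_power2 by (simp add: power_divide add_divide_distrib)
  also have "X^2 + Y^2 = 2 * (1 - u) * K^2 * Dr * Ds"
    unfolding X_def Y_def K_def Dr_def Ds_def foot_denom_def using uv by algebra
  also have "2 * (1 - u) * K^2 * Dr * Ds / (Dr * Ds)^2 = 2 * (1 - u) * K^2 / (Dr * Ds)"
    using Dr Ds by (simp add: power2_eq_square)
  finally show ?thesis unfolding K_def u_def Dr_def Ds_def .
qed

lemma arcosh_ln_ratio:
  fixes M q :: real
  assumes "0 < M" "0 < q"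
  shows "arcosh (1 + (M - q)^2 / (2 * q * M)) = \<bar>ln (M / q)\<bar>"
proof -
  have "1 + (M - q)^2 / (2 * q * M) = (M / q + inverse (M / q)) / 2"
    using assms by (simp add: field_simps power2_eq_square)
  also have "\<dots> = cosh \<bar>ln (M / q)\<bar>"
    using cosh_ln_real[of "M / q"] assms by (cases "ln (M / q) \<ge> 0") auto
  finally show ?thesis by (simp only: arcosh_cosh_real[OF abs_ge_zero])
qed

lemma hdist_horo_feet:
  assumes e: "cmod e = 1" "e \<noteq> 1" and r: "0 < r" "r < 1" and s: "0 < s" "s < 1"
  shows "hdist (horo_foot_at_1 r e) (e * horo_foot_at_1 s (cnj e))
       = \<bar>ln ((1 - Re e) * (1 - r) * (1 - s) / (2 * r * s))\<bar>"
proof -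
  define u M where "u = Re e" and "M = (1 - u) * (1 - r) * (1 - s)"
  have uv: "u^2 + (Im e)^2 = 1" and u: "u < 1" using unit_circle_coords[OF e] by (auto simp: u_def)
  have Dr: "foot_denom r u > 0" and Ds: "foot_denom s u > 0" using uv u by (auto intro: foot_denom_pos)
  have M: "M > 0" using u r s by (simp add: M_def)
  have "cmod (cnj e) = 1" "cnj e \<noteq> 1" using e by auto
  from one_minus_norm_sq_horo_foot_at_1[OF this s]
  have Q: "1 - (cmod (e * horo_foot_at_1 s (cnj e)))^2 = 4 * (1 - s) * s * (1 - u) / foot_denom s u"
    by (simp add: norm_mult e u_def)
  have P: "1 - (cmod (horo_foot_at_1 r e))^2 = 4 * (1 - r) * r * (1 - u) / foot_denom r u"
    using one_minus_norm_sq_horo_foot_at_1[OF e r] by (simp add: u_def)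
  have PQ: "(cmod (horo_foot_at_1 r e - e * horo_foot_at_1 s (cnj e)))^2
      = 2 * (1 - u) * (M - 2 * r * s)^2 / (foot_denom r u * foot_denom s u)"
    using norm_sq_diff_horo_feet[OF e] by (simp add: u_def M_def)
  have "(4 * (1 - r) * r * (1 - u) / foot_denom r u) * (4 * (1 - s) * s * (1 - u) / foot_denom s u)
      = 16 * r * s * (1 - u) * M / (foot_denom r u * foot_denom s u)"
    by (simp add: M_def field_simps)
  then have "1 + 2 * (cmod (horo_foot_at_1 r e - e * horo_foot_at_1 s (cnj e)))^2
          / ((1 - (cmod (horo_foot_at_1 r e))^2) * (1 - (cmod (e * horo_foot_at_1 s (cnj e)))^2))
      = 1 + 2 * (2 * (1 - u) * (M - 2 * r * s)^2 / (foot_denom r u * foot_denom s u))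
          / (16 * r * s * (1 - u) * M / (foot_denom r u * foot_denom s u))"
    unfolding P Q PQ by (rule arg_cong)
  also have "\<dots> = 1 + (M - 2 * r * s)^2 / (2 * (2 * r * s) * M)"
    using Dr Ds u r s M by (simp add: field_simps)
  finally have "hdist (horo_foot_at_1 r e) (e * horo_foot_at_1 s (cnj e))
      = arcosh (1 + (M - 2 * r * s)^2 / (2 * (2 * r * s) * M))"
    unfolding hdist_def by (rule arg_cong)
  also have "\<dots> = \<bar>ln (M / (2 * r * s))\<bar>" using M r s by (intro arcosh_ln_ratio) simp_all
  finally show ?thesis unfolding M_def u_def .
qed

lemma horo_foot_in_horoball_iff:
  assumes e: "cmod e = 1" "e \<noteq> 1" and r: "0 < r" and s: "0 < s" "s < 1"
  shows "e * horo_foot_at_1 s (cnj e) \<in> horoball 1 r \<longleftrightarrow> (1 - Re e) * (1 - r) * (1 - s) < 2 * r * s"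
proof -
  define Q where "Q = e * horo_foot_at_1 s (cnj e)"
  define u v Ds where "u = Re e" and "v = Im e" and "Ds = foot_denom s u"
  have uv: "u^2 + v^2 = 1" and u: "u < 1" using unit_circle_coords[OF e] by (auto simp: u_def v_def)
  have Ds: "Ds > 0" unfolding Ds_def using uv u by (rule foot_denom_pos)
  have "cmod (cnj e) = 1" "cnj e \<noteq> 1" using e by auto
  from one_minus_norm_sq_horo_foot_at_1[OF this s]
  have normQ: "(cmod Q)^2 = 1 - 4 * (1 - s) * s * (1 - u) / Ds"
    by (simp add: Q_def norm_mult e u_def Ds_def)
  have ReQ: "Re Q = (u * (Ds - 2 * s * (1 - u)) + 2 * s^2 * v^2) / Ds"
    using Ds by (simp add: Q_def horo_foot_at_1_def u_def v_def Ds_def field_simps power2_eq_square)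
  have "Q \<in> horoball 1 r \<longleftrightarrow> (cmod (Q - of_real (1 - r)))^2 - r^2 < 0"
    unfolding horoball_def using r
    by (simp del: of_real_diff) (meson norm_ge_zero power2_less_imp_less power_strict_mono less_imp_le pos2)
  also have "(cmod (Q - of_real (1 - r)))^2 - r^2 = (cmod Q)^2 - 2 * (1 - r) * Re Q + 1 - 2 * r"
    unfolding cmod_power2 by (simp add: power2_eq_square algebra_simps)
  also have "\<dots> = (Ds - 4 * (1 - s) * s * (1 - u) - 2 * (1 - r) * (u * (Ds - 2 * s * (1 - u)) + 2 * s^2 * v^2)
                    + (1 - 2 * r) * Ds) / Ds"
    unfolding normQ ReQ using Ds by (simp add: field_simps)
  also have "Ds - 4 * (1 - s) * s * (1 - u) - 2 * (1 - r) * (u * (Ds - 2 * s * (1 - u)) + 2 * s^2 * v^2)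
               + (1 - 2 * r) * Ds = 2 * (1 - u) * (1 - s) * ((1 - u) * (1 - r) * (1 - s) - 2 * r * s)"
    unfolding Ds_def foot_denom_def using uv by algebra
  finally show ?thesis
    using u s Ds by (simp add: Q_def u_def zero_less_mult_iff divide_less_0_iff mult_less_0_iff)
qed

lemma lambda_length_eq:
  assumes \<xi>: "cmod \<xi> = 1" and \<eta>: "cmod \<eta> = 1" and "\<xi> \<noteq> \<eta>"
    and r: "0 < r" "r < 1" and s: "0 < s" "s < 1"
  shows "lambda_length \<xi> r \<eta> s = sqrt ((1 - Re (cnj \<xi> * \<eta>)) * (1 - r) * (1 - s) / (2 * r * s))"
proof -
  define e L where "e = cnj \<xi> * \<eta>" and "L = (1 - Re e) * (1 - r) * (1 - s) / (2 * r * s)"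
  have \<eta>e: "\<xi> * e = \<eta>" unfolding e_def by (rule unit_mult_cnj_mult[OF \<xi>])
  have e: "cmod e = 1" "e \<noteq> 1" unfolding e_def using cnj_mult_unit_circle assms by blast+
  have L: "L > 0" using unit_circle_coords(2)[OF e] r s by (simp add: L_def)
  have P: "horo_foot \<xi> r \<eta> = \<xi> * horo_foot_at_1 r e"
    using horo_foot_eq[OF \<xi> \<eta> \<open>\<xi> \<noteq> \<eta>\<close> r] by (simp add: e_def)
  have "cnj \<eta> * \<xi> = cnj e" by (simp add: e_def mult.commute)
  then have Q: "horo_foot \<eta> s \<xi> = \<xi> * (e * horo_foot_at_1 s (cnj e))"
    using horo_foot_eq[OF \<eta> \<xi> \<open>\<xi> \<noteq> \<eta>\<close>[symmetric] s] \<eta>e by (simp add: mult.assoc)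
  have "\<xi> * (e * horo_foot_at_1 s (cnj e)) \<in> horoball \<xi> r \<longleftrightarrow> L < 1"
    using horoball_rotate[OF \<xi>, of _ 1] horo_foot_in_horoball_iff[OF e r(1) s] r s
    by (simp add: L_def pos_divide_less_eq)
  then have "horo_signed_length \<xi> r \<eta> s = (if L < 1 then - \<bar>ln L\<bar> else \<bar>ln L\<bar>)"
    unfolding horo_signed_length_def Let_def P Q hdist_rotate[OF \<xi>] hdist_horo_feet[OF e r s]
      L_def[symmetric] by (rule if_cong) simp_all
  also have "\<dots> = ln L" using L by auto
  finally have "lambda_length \<xi> r \<eta> s = exp (ln L / 2)" by (simp add: lambda_length_def)
  also have "\<dots> = sqrt L" using L by (simp add: powr_half_sqrt[symmetric] powr_def)
  finally show ?thesis unfolding L_def e_def .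
qed

lemma lambda_length_cis:
  assumes x: "0 < x" "x < pi" and r: "0 < r" "r < 1" and s: "0 < s" "s < 1"
  shows "lambda_length (cis \<alpha>) r (cis (\<alpha> + 2 * x)) s = sin x * sqrt ((1 - r) / r * ((1 - s) / s))"
proof -
  have sin_x: "sin x > 0" using sin_gt_zero x by auto
  have "cnj (cis \<alpha>) * cis (\<alpha> + 2 * x) = cis (2 * x)" by (simp add: cis_cnj cis_mult)
  then have Re: "1 - Re (cnj (cis \<alpha>) * cis (\<alpha> + 2 * x)) = 2 * (sin x)^2"
    by (simp add: cos_double_sin)
  have "cis \<alpha> \<noteq> cis (\<alpha> + 2 * x)"
  proof
    assume eq: "cis \<alpha> = cis (\<alpha> + 2 * x)"
    have "Re (cnj (cis \<alpha>) * cis (\<alpha> + 2 * x)) = 1" unfolding eq by (simp add: cis_cnj cis_mult)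
    with Re sin_x show False by simp
  qed
  then have "lambda_length (cis \<alpha>) r (cis (\<alpha> + 2 * x)) s
      = sqrt ((1 - Re (cnj (cis \<alpha>) * cis (\<alpha> + 2 * x))) * (1 - r) * (1 - s) / (2 * r * s))"
    by (intro lambda_length_eq r s) simp_all
  also have "\<dots> = sqrt ((sin x)^2 * ((1 - r) / r * ((1 - s) / s)))"
    unfolding Re using r s by (simp add: field_simps)
  also have "\<dots> = sin x * sqrt ((1 - r) / r * ((1 - s) / s))"
    using sin_x by (simp only: real_sqrt_mult real_sqrt_abs abs_of_pos)
  finally show ?thesis .
qed

lemma sine_ptolemy_relation:
  fixes t x A B :: real
  assumes "0 \<le> A * B"
  shows "(sin t * A) * (sin t * B) = (sin x * sqrt (A * B))^2
           + 2 * cos t * (sin x * sqrt (A * B)) * (sin (t - x) * sqrt (A * B))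
           + (sin (t - x) * sqrt (A * B))^2"
proof -
  have "sin (t - x) = sin t * cos x - cos t * sin x" by (rule sin_diff)
  moreover have "(sin t)^2 + (cos t)^2 = 1" "(sin x)^2 + (cos x)^2 = 1" by simp_all
  moreover have "(sqrt (A * B))^2 = A * B" using assms by simp
  ultimately show ?thesis by algebra
qed

theorem mainTheorem2:
  fixes p :: nat and \<phi> :: real and h :: "complex \<Rightarrow> real"
    and v w :: "int \<Rightarrow> complex" and a b c c' :: real
  assumes "p \<ge> 2"
    and "0 < \<phi>" and "\<phi> < 2 * pi / real p"
    and v_def: "\<And>m. v m = cis (2 * pi * real_of_int m / real p)"
    and w_def: "\<And>m. w m = cis (\<phi> + 2 * pi * real_of_int m / real p)"
    and h_pos: "\<And>m. 0 < h (v m) \<and> h (v m) < 1 \<and> 0 < h (w m) \<and> h (w m) < 1"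
    and h_inv: "\<And>m. h (v (m + 1)) = h (v m) \<and> h (w (m + 1)) = h (w m)"
    and c_def: "c = lambda_length (v 0) (h (v 0)) (v 1) (h (v 1))"
    and c'_def: "c' = lambda_length (w 0) (h (w 0)) (w 1) (h (w 1))"
    and a_def: "a = lambda_length (v 0) (h (v 0)) (w 0) (h (w 0))"
    and b_def: "b = lambda_length (w 0) (h (w 0)) (v 1) (h (v 1))"
  shows "c * c' = a^2 + 2 * cos (pi / real p) * a * b + b^2"
proof -
  define t x where "t = pi / real p" and "x = \<phi> / 2"
  define A B where "A = (1 - h (v 0)) / h (v 0)" and "B = (1 - h (w 0)) / h (w 0)"
  have hv: "0 < h (v 0)" "h (v 0) < 1" and hw: "0 < h (w 0)" "h (w 0) < 1"
    using h_pos[of 0] by auto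
  have "h (v 1) = h (v 0)" "h (w 1) = h (w 0)" using h_inv[of 0] by auto
  have "2 \<le> real p" using \<open>p \<ge> 2\<close> by simp
  then have t: "0 < t" "t < pi" and x: "0 < x" "x < t"
    using \<open>0 < \<phi>\<close> \<open>\<phi> < 2 * pi / real p\<close> pi_gt_zero by (auto simp: t_def x_def field_simps)
  have v0: "v 0 = cis 0" and v1: "v 1 = cis (0 + 2 * t)" and v1': "v 1 = cis (\<phi> + 2 * (t - x))"
    and w0: "w 0 = cis \<phi>" and w0': "w 0 = cis (0 + 2 * x)" and w1: "w 1 = cis (\<phi> + 2 * t)"
    using v_def[of 0] v_def[of 1] w_def[of 0] w_def[of 1] by (simp_all add: t_def x_def)
  have c: "c = sin t * A"
    using lambda_length_cis[OF t hv hv, of 0] hv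
    unfolding c_def \<open>h (v 1) = h (v 0)\<close> unfolding v0 v1 A_def
    by (simp add: real_sqrt_divide real_sqrt_abs2)
  have c': "c' = sin t * B"
    using lambda_length_cis[OF t hw hw, of \<phi>] hw
    unfolding c'_def \<open>h (w 1) = h (w 0)\<close> unfolding w0 w1 B_def
    by (simp add: real_sqrt_divide real_sqrt_abs2)
  have a: "a = sin x * sqrt (A * B)"
    using lambda_length_cis[OF x(1) _ hv hw, of 0] x t
    unfolding a_def v0 w0' A_def B_def by simp
  have b: "b = sin (t - x) * sqrt (A * B)"
    using lambda_length_cis[of "t - x", OF _ _ hw hv, of \<phi>] x t
    unfolding b_def \<open>h (v 1) = h (v 0)\<close> unfolding w0 v1' A_def B_def by (simp add: mult.commute)
  have "0 \<le> A * B" using hv hw by (simp add: A_def B_def)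
  then show ?thesis unfolding c c' a b t_def[symmetric] by (rule sine_ptolemy_relation)
qed

end
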